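(* Let $d\ge1$, $p\in\mathcal H(n,d)$, let $P$ be the induced homogeneous polynomial, write $P=S\cdot Q$, and let $K$ be the support of the Newton diagram of $Q$. Then $K$ is connected, contains $(0,\dots,0)$, and has size $d$.
   Context: $s(x)=x_1+\dots+x_n$. $\mathcal H(n,d)$ is the set of $p\in\mathbb R[x_1,\dots,x_n]$ of degree $d$ with all coefficients nonnegative and $p(x)=1$ whenever $s(x)=1$. Writing $p=\sum_{k=0}^dp_k$ with $p_k$ homogeneous of degree $k$, the induced homogeneous polynomial is $P(X_0,\dots,X_n)=\sum_{k=0}^dp_k(X_1,\dots,X_n)(-X_0)^{d-k}-(-X_0)^d$; it vanishes where $S(X)=X_0+X_1+\dots+X_n=0$, so $P=SQ$ with $Q$ homogeneous. The Newton diagram of $Q$ (with $\deg P=d$) is the function $D\colon\mathbb Z^n\to\{0,P,N\}$ assigning to $m$ the value $P$, $0$, or $N$ according as the coefficient of $X_0^{d-1-|m|}X_1^{m_1}\cdots X_n^{m_n}$ in $Q$ is positive, zero (including when some exponent is negative), or negative, where $|m|=m_1+\dots+m_n$; its support is $K=D^{-1}(\{P,N\})$. With $e_1,\dots,e_n$ the standard basis, two distinct points $m,m'$ are adjacent if $m-m'\in\{\pm e_j\}\cup\{e_j-e_k:j\ne k\}$; $K$ is connected if any two points of $K$ are joined by a path of successively adjacent points of $K$. The size of $K$ is $k-|a|+1$ where $k=\max_{m\in K}|m|$ and $a_j=\min_{m\in K}m_j$. *)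

theory Defs
  imports Complex_Main
begin

text \<open>Polynomials in n variables are coefficient functions on exponent vectors
  m :: nat \<Rightarrow> nat (variable x_{i+1} has exponent m i, i < n), finitely supported,
  and with m i = 0 for i \<ge> n on the support.\<close>

definition deg :: "nat \<Rightarrow> (nat \<Rightarrow> nat) \<Rightarrow> nat" where
  "deg n m = (\<Sum>i<n. m i)"

definition supp :: "((nat \<Rightarrow> nat) \<Rightarrow> real) \<Rightarrow> (nat \<Rightarrow> nat) set" where
  "supp c = {m. c m \<noteq> 0}"

definition is_poly :: "nat \<Rightarrow> ((nat \<Rightarrow> nat) \<Rightarrow> real) \<Rightarrow> bool" where
  "is_poly n c \<longleftrightarrow> finite (supp c) \<and> (\<forall>m\<in>supp c. \<forall>i\<ge>n. m i = 0)"

definition eval :: "nat \<Rightarrow> ((nat \<Rightarrow> nat) \<Rightarrow> real) \<Rightarrow> (nat \<Rightarrow> real) \<Rightarrow> real" where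
  "eval n c x = (\<Sum>m\<in>supp c. c m * (\<Prod>i<n. x i ^ m i))"

definition total_degree :: "nat \<Rightarrow> ((nat \<Rightarrow> nat) \<Rightarrow> real) \<Rightarrow> nat" where
  "total_degree n c = Max (deg n ` supp c)"

text \<open>The class H(n,d); the point x = (x_1,...,x_n) is (x 0, ..., x (n-1)).\<close>
definition H :: "nat \<Rightarrow> nat \<Rightarrow> ((nat \<Rightarrow> nat) \<Rightarrow> real) \<Rightarrow> bool" where
  "H n d c \<longleftrightarrow> is_poly n c \<and> supp c \<noteq> {} \<and> total_degree n c = d
     \<and> (\<forall>m. c m \<ge> 0)
     \<and> (\<forall>x::nat \<Rightarrow> real. (\<Sum>i<n. x i) = 1 \<longrightarrow> eval n c x = 1)"

text \<open>Induced homogeneous polynomial P(X_0,...,X_n), with X_i = X i: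
  P = sum_k p_k(X_1..X_n) (-X_0)^(d-k) - (-X_0)^d.\<close>
definition induced :: "nat \<Rightarrow> nat \<Rightarrow> ((nat \<Rightarrow> nat) \<Rightarrow> real) \<Rightarrow> (nat \<Rightarrow> real) \<Rightarrow> real" where
  "induced n d c X =
     (\<Sum>m\<in>supp c. c m * (\<Prod>i<n. X (Suc i) ^ m i) * (- X 0) ^ (d - deg n m)) - (- X 0) ^ d"

definition S :: "nat \<Rightarrow> (nat \<Rightarrow> real) \<Rightarrow> real" where
  "S n X = (\<Sum>i<Suc n. X i)"

definition is_quotient :: "nat \<Rightarrow> nat \<Rightarrow> ((nat \<Rightarrow> nat) \<Rightarrow> real) \<Rightarrow> ((nat \<Rightarrow> nat) \<Rightarrow> real) \<Rightarrow> bool" where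
  "is_quotient n d c q \<longleftrightarrow> is_poly (Suc n) q
     \<and> (\<forall>X. induced n d c X = S n X * eval (Suc n) q X)"

text \<open>Integer points of Z^n: m :: nat \<Rightarrow> int with m i = 0 for i \<ge> n.\<close>
definition Zn :: "nat \<Rightarrow> (nat \<Rightarrow> int) set" where
  "Zn n = {m. \<forall>i\<ge>n. m i = 0}"

definition absZ :: "nat \<Rightarrow> (nat \<Rightarrow> int) \<Rightarrow> int" where
  "absZ n m = (\<Sum>i<n. m i)"

text \<open>Coefficient of X_0^(d-1-|m|) X_1^(m_1) ... X_n^(m_n) in Q (zero if an exponent is negative).\<close>
definition newton_coeff :: "nat \<Rightarrow> nat \<Rightarrow> ((nat \<Rightarrow> nat) \<Rightarrow> real) \<Rightarrow> (nat \<Rightarrow> int) \<Rightarrow> real" where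
  "newton_coeff n d q m =
     (if (\<forall>i<n. m i \<ge> 0) \<and> int d - 1 - absZ n m \<ge> 0
      then q (\<lambda>j. if j = 0 then nat (int d - 1 - absZ n m)
                  else if j \<le> n then nat (m (j - 1)) else 0)
      else 0)"

datatype sign = Zero | Pos | Neg

definition newton_diagram :: "nat \<Rightarrow> nat \<Rightarrow> ((nat \<Rightarrow> nat) \<Rightarrow> real) \<Rightarrow> (nat \<Rightarrow> int) \<Rightarrow> sign" where
  "newton_diagram n d q m =
     (if newton_coeff n d q m > 0 then Pos else if newton_coeff n d q m < 0 then Neg else Zero)"

definition newton_support :: "nat \<Rightarrow> nat \<Rightarrow> ((nat \<Rightarrow> nat) \<Rightarrow> real) \<Rightarrow> (nat \<Rightarrow> int) set" where
  "newton_support n d q = {m \<in> Zn n. newton_diagram n d q m \<in> {Pos, Neg}}"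

definition adjacent :: "nat \<Rightarrow> (nat \<Rightarrow> int) \<Rightarrow> (nat \<Rightarrow> int) \<Rightarrow> bool" where
  "adjacent n m m' \<longleftrightarrow> m \<noteq> m' \<and>
     ((\<exists>j<n. (\<forall>i. m i - m' i = (if i = j then 1 else 0))
            \<or> (\<forall>i. m i - m' i = (if i = j then -1 else 0)))
      \<or> (\<exists>j<n. \<exists>k<n. j \<noteq> k \<and>
            (\<forall>i. m i - m' i = (if i = j then 1 else 0) - (if i = k then 1 else 0))))"

definition lattice_connected :: "nat \<Rightarrow> (nat \<Rightarrow> int) set \<Rightarrow> bool" where
  "lattice_connected n K \<longleftrightarrow>
     (\<forall>a\<in>K. \<forall>b\<in>K. (\<lambda>x y. x \<in> K \<and> y \<in> K \<and> adjacent n x y)\<^sup>*\<^sup>* a b)"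

definition lattice_size :: "nat \<Rightarrow> (nat \<Rightarrow> int) set \<Rightarrow> int" where
  "lattice_size n K = Max (absZ n ` K) - (\<Sum>j<n. Min ((\<lambda>m. m j) ` K)) + 1"

end

theory Submission
  imports Defs "HOL-Computational_Algebra.Polynomial"
begin

(*
  Write
  mul_sum N c for the coefficients of (X_0 + ... + X_{N-1}) * c.  Two polynomials with
  the same values everywhere have the same coefficients (Kronecker substitution reduces
  this to univariate polynomials), so "P = S * Q" becomes the coefficient identity
  mul_sum (n+1) q = P_coeff, where P_coeff are the coefficients of P.

  Existence of Q: P vanishes on {S = 0} (this is the hypothesis p = 1 on s = 1, extended
  to the degenerate part of the hyperplane by continuity), and dividing a homogeneous
  polynomial by S recursively in the X_0-degree (div_S) leaves a remainder free of X_0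
  that vanishes on {S = 0}, hence everywhere.

  The Newton diagram of Q is the set of exponents of Q written in the coordinates
  m = (M_1, ..., M_n), with M_0 = d - 1 - |m|.  Its support contains 0 because the
  coefficient of X_0^d in P is (-1)^d (p(0) - 1) and p(0) <> 1; it reaches |m| = d - 1
  because p has a term of degree d; and it lies in the simplex {m >= 0, |m| <= d - 1};
  hence its size is d.  For connectivity, restrict Q to a union K' of components of the
  support not containing 0.  Since neighbouring exponents of S * Q come from adjacent
  diagram points, S * Q' agrees with P wherever it is nonzero and misses X_0^d.  At the
  point (-n, 1, ..., 1) the form S vanishes, while every such term of P is positive
  (the coefficients of p are nonnegative); so S * Q' = 0, hence Q' = 0 and K' = {}.
*)

section \<open>Polynomials as coefficient functions\<close>

definition mon :: "nat \<Rightarrow> (nat \<Rightarrow> nat) \<Rightarrow> (nat \<Rightarrow> real) \<Rightarrow> real" where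
  "mon N M X = (\<Prod>i<N. X i ^ M i)"

lemma eval_superset:
  assumes "finite A" "supp c \<subseteq> A"
  shows "eval N c X = (\<Sum>M\<in>A. c M * mon N M X)"
  unfolding eval_def mon_def
  by (rule sum.mono_neutral_left) (use assms in \<open>auto simp: supp_def\<close>)

lemma base_expansion_inj:
  fixes B :: nat
  shows "(\<forall>i<N. M i < B) \<Longrightarrow> (\<forall>i<N. M' i < B) \<Longrightarrow>
     (\<Sum>i<N. M i * B^i) = (\<Sum>i<N. M' i * B^i) \<Longrightarrow> i < N \<Longrightarrow> M i = M' i"
proof (induction N arbitrary: M M' i)
  case 0
  then show ?case by simp
next
  case (Suc N)
  have shift: "(\<Sum>i<Suc N. f i * B^i) = f 0 + B * (\<Sum>i<N. f (Suc i) * B^i)" for f :: "nat \<Rightarrow> nat"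
    unfolding sum.lessThan_Suc_shift by (simp add: sum_distrib_left mult_ac)
  from Suc.prems(3) have eq:
    "M 0 + B * (\<Sum>i<N. M (Suc i) * B^i) = M' 0 + B * (\<Sum>i<N. M' (Suc i) * B^i)"
    by (simp only: shift)
  have digit0: "M 0 < B" "M' 0 < B" using Suc.prems by auto
  have first: "M 0 = M' 0"
  proof -
    have "(M 0 + B * (\<Sum>i<N. M (Suc i) * B^i)) mod B = M 0" using digit0 by simp
    moreover have "(M' 0 + B * (\<Sum>i<N. M' (Suc i) * B^i)) mod B = M' 0" using digit0 by simp
    ultimately show ?thesis using eq by simp
  qed
  have rest: "(\<Sum>i<N. M (Suc i) * B^i) = (\<Sum>i<N. M' (Suc i) * B^i)"
    using eq first digit0 by simp
  show ?case
  proof (cases i)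
    case 0 then show ?thesis using first by simp
  next
    case (Suc j)
    have "(\<lambda>i. M (Suc i)) j = (\<lambda>i. M' (Suc i)) j"
      by (rule Suc.IH) (use Suc.prems rest Suc in auto)
    then show ?thesis using Suc by simp
  qed
qed

text \<open>Substituting X_i = t^(B^i) turns it into a univariate polynomial whose coefficients
  are exactly those of c, by uniqueness of base-B expansions.\<close>
lemma eval_zero_imp_coeff_zero:
  assumes ip: "is_poly N c" and zero: "\<And>X. eval N c X = 0"
  shows "c M = 0"
proof (cases "M \<in> supp c")
  case False then show ?thesis by (simp add: supp_def)
next
  case True
  have fin: "finite (supp c)" using ip by (simp add: is_poly_def)
  define B where "B = Suc (\<Sum>M\<in>supp c. \<Sum>i<N. M i)"
  define kron where "kron M = (\<Sum>i<N. M i * B^i)" for M :: "nat \<Rightarrow> nat"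
  have digits: "M' i < B" if "M' \<in> supp c" "i < N" for M' i
  proof -
    have "M' i \<le> (\<Sum>i<N. M' i)" using that by (intro member_le_sum) auto
    also have "\<dots> \<le> (\<Sum>M\<in>supp c. \<Sum>i<N. M i)" using that fin
      by (intro member_le_sum[where f="\<lambda>M. \<Sum>i<N. M i"]) auto
    finally show ?thesis unfolding B_def by simp
  qed
  have kron_inj: "kron M' = kron M \<longleftrightarrow> M' = M" if M': "M' \<in> supp c" for M'
  proof
    assume h: "kron M' = kron M"
    show "M' = M"
    proof
      fix i show "M' i = M i"
      proof (cases "i < N")
        case True
        show ?thesis
          by (rule base_expansion_inj[of N M' B M])
             (use h True digits M' \<open>M \<in> supp c\<close> in \<open>auto simp: kron_def\<close>)
      next
        case False
        then show ?thesis using ip M' \<open>M \<in> supp c\<close> unfolding is_poly_def by (metis not_le)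
      qed
    qed
  qed simp
  define u where "u = (\<Sum>M'\<in>supp c. monom (c M') (kron M'))"
  have "poly u t = eval N c (\<lambda>i. t ^ (B^i))" for t
  proof -
    have "poly u t = (\<Sum>M'\<in>supp c. c M' * t ^ kron M')"
      by (simp add: u_def poly_sum poly_monom)
    also have "\<dots> = eval N c (\<lambda>i. t ^ (B^i))"
      unfolding eval_def kron_def
      by (intro sum.cong refl) (simp add: power_sum power_mult[symmetric] mult.commute)
    finally show ?thesis .
  qed
  then have "u = 0" using zero poly_all_0_iff_0 by metis
  have "coeff u (kron M) = (\<Sum>M'\<in>supp c. if kron M' = kron M then c M' else 0)"
    by (simp add: u_def coeff_sum coeff_monom)
  also have "\<dots> = (\<Sum>M'\<in>supp c. if M' = M then c M' else 0)"
    using kron_inj by (intro sum.cong refl) simp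
  also have "\<dots> = c M" using True fin by simp
  finally show ?thesis using \<open>u = 0\<close> by simp
qed

lemma is_poly_diff:
  assumes "is_poly N c" "is_poly N e"
  shows "is_poly N (\<lambda>M. c M - e M)"
proof -
  have "supp (\<lambda>M. c M - e M) \<subseteq> supp c \<union> supp e" by (auto simp: supp_def)
  then show ?thesis using assms unfolding is_poly_def by (auto intro: finite_subset)
qed

lemma eval_diff:
  assumes "finite (supp c)" "finite (supp e)"
  shows "eval N (\<lambda>M. c M - e M) X = eval N c X - eval N e X"
proof -
  let ?A = "supp c \<union> supp e"
  have fin: "finite ?A" using assms by auto
  have "eval N (\<lambda>M. c M - e M) X = (\<Sum>M\<in>?A. (c M - e M) * mon N M X)"
    by (rule eval_superset[OF fin]) (auto simp: supp_def)
  also have "\<dots> = (\<Sum>M\<in>?A. c M * mon N M X) - (\<Sum>M\<in>?A. e M * mon N M X)"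
    by (simp add: left_diff_distrib sum_subtractf)
  also have "\<dots> = eval N c X - eval N e X"
    by (simp add: eval_superset[OF fin])
  finally show ?thesis .
qed

lemma coeffs_eq_if_evals_eq:
  assumes "is_poly N c" "is_poly N e" "\<And>X. eval N c X = eval N e X"
  shows "c M = e M"
proof -
  have "(\<lambda>M. c M - e M) M = 0"
    by (rule eval_zero_imp_coeff_zero[OF is_poly_diff[OF assms(1,2)]])
       (use assms in \<open>simp add: eval_diff is_poly_def\<close>)
  then show ?thesis by simp
qed

section \<open>Multiplication by a variable and by a sum of variables\<close>

definition mul_var :: "nat \<Rightarrow> ((nat \<Rightarrow> nat) \<Rightarrow> real) \<Rightarrow> (nat \<Rightarrow> nat) \<Rightarrow> real" where
  "mul_var a c M = (if 1 \<le> M a then c (M(a := M a - 1)) else 0)"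

definition mul_sum :: "nat \<Rightarrow> ((nat \<Rightarrow> nat) \<Rightarrow> real) \<Rightarrow> (nat \<Rightarrow> nat) \<Rightarrow> real" where
  "mul_sum N c M = (\<Sum>a<N. mul_var a c M)"

lemma mon_incr:
  assumes "a < N"
  shows "mon N (M(a := M a + 1)) X = X a * mon N M X"
proof -
  have "mon N (M(a := M a + 1)) X = (\<Prod>i<N. (if i = a then X a else 1) * X i ^ M i)"
    unfolding mon_def by (intro prod.cong refl) auto
  also have "\<dots> = X a * mon N M X"
    unfolding mon_def prod.distrib using assms by (simp add: prod.delta)
  finally show ?thesis .
qed

lemma inj_incr: "inj (\<lambda>M::nat \<Rightarrow> nat. M(a := M a + 1))"
proof (rule injI)
  fix M M' :: "nat \<Rightarrow> nat" assume h: "M(a := M a + 1) = M'(a := M' a + 1)"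
  show "M = M'"
  proof
    fix i show "M i = M' i" using fun_cong[OF h, of i] by (cases "i = a") auto
  qed
qed

lemma supp_mul_var: "supp (mul_var a c) \<subseteq> (\<lambda>M. M(a := M a + 1)) ` supp c"
proof
  fix M assume "M \<in> supp (mul_var a c)"
  then have h: "1 \<le> M a" "c (M(a := M a - 1)) \<noteq> 0"
    by (auto simp: supp_def mul_var_def split: if_splits)
  then have "M = (M(a := M a - 1))(a := (M(a := M a - 1)) a + 1)" by auto
  then show "M \<in> (\<lambda>M. M(a := M a + 1)) ` supp c" using h(2) unfolding supp_def
    by (metis (mono_tags, lifting) image_eqI mem_Collect_eq)
qed

lemma finite_supp_mul_var: "finite (supp c) \<Longrightarrow> finite (supp (mul_var a c))"
  using supp_mul_var finite_subset by blast

lemma eval_mul_var: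
  assumes "finite (supp c)" "a < N"
  shows "eval N (mul_var a c) X = X a * eval N c X"
proof -
  let ?incr = "\<lambda>M. M(a := (M a + 1::nat))"
  have "eval N (mul_var a c) X = (\<Sum>M\<in>?incr ` supp c. mul_var a c M * mon N M X)"
    by (rule eval_superset) (use assms supp_mul_var in auto)
  also have "\<dots> = (\<Sum>M\<in>supp c. mul_var a c (?incr M) * mon N (?incr M) X)"
    by (subst sum.reindex) (use inj_incr[of a] in \<open>auto intro: inj_on_subset\<close>)
  also have "\<dots> = (\<Sum>M\<in>supp c. X a * (c M * mon N M X))"
  proof (intro sum.cong refl)
    fix M
    have "(?incr M)(a := ?incr M a - 1) = M" by auto
    then show "mul_var a c (?incr M) * mon N (?incr M) X = X a * (c M * mon N M X)"
      using mon_incr[OF assms(2)] by (simp add: mul_var_def)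
  qed
  also have "\<dots> = X a * eval N c X"
    by (simp add: eval_superset[OF assms(1) subset_refl] sum_distrib_left)
  finally show ?thesis .
qed

lemma is_poly_mul_var:
  assumes "is_poly N c" "a < N"
  shows "is_poly N (mul_var a c)"
proof -
  have "finite (supp (mul_var a c))" using assms finite_supp_mul_var by (auto simp: is_poly_def)
  moreover have "\<forall>M\<in>supp (mul_var a c). \<forall>i\<ge>N. M i = 0"
  proof (intro ballI allI impI)
    fix M i assume M: "M \<in> supp (mul_var a c)" and i: "N \<le> i"
    then obtain M' where "M' \<in> supp c" "M = M'(a := M' a + 1)" using supp_mul_var by blast
    then show "M i = 0" using assms i by (auto simp: is_poly_def)
  qed
  ultimately show ?thesis by (simp add: is_poly_def)
qed

lemma supp_mul_sum: "supp (mul_sum N c) \<subseteq> (\<Union>a<N. supp (mul_var a c))"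
  unfolding supp_def mul_sum_def by (auto intro: ccontr)

lemma finite_supp_mul_sum: "finite (supp c) \<Longrightarrow> finite (supp (mul_sum N c))"
  by (rule finite_subset[OF supp_mul_sum]) (auto intro: finite_supp_mul_var)

lemma is_poly_mul_sum:
  assumes "is_poly N c"
  shows "is_poly N (mul_sum N c)"
proof -
  have "finite (supp (mul_sum N c))" using assms finite_supp_mul_sum by (auto simp: is_poly_def)
  moreover have "\<forall>M\<in>supp (mul_sum N c). \<forall>i\<ge>N. M i = 0"
  proof (intro ballI allI impI)
    fix M i assume M: "M \<in> supp (mul_sum N c)" and i: "N \<le> i"
    then obtain a where "a < N" "M \<in> supp (mul_var a c)" using supp_mul_sum by blast
    then show "M i = 0" using is_poly_mul_var[OF assms \<open>a < N\<close>] i by (auto simp: is_poly_def)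
  qed
  ultimately show ?thesis by (simp add: is_poly_def)
qed

lemma eval_mul_sum:
  assumes "finite (supp c)"
  shows "eval N (mul_sum N c) X = (\<Sum>a<N. X a) * eval N c X"
proof -
  let ?A = "\<Union>a<N. supp (mul_var a c)"
  have fin: "finite ?A" using assms by (auto intro: finite_supp_mul_var)
  have "eval N (mul_sum N c) X = (\<Sum>M\<in>?A. (\<Sum>a<N. mul_var a c M) * mon N M X)"
    unfolding mul_sum_def[symmetric] by (rule eval_superset[OF fin supp_mul_sum])
  also have "\<dots> = (\<Sum>a<N. \<Sum>M\<in>?A. mul_var a c M * mon N M X)"
    by (simp add: sum_distrib_right sum.swap[where A="?A"])
  also have "\<dots> = (\<Sum>a<N. X a * eval N c X)"
  proof (intro sum.cong refl)
    fix a assume a: "a \<in> {..<N}"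
    then have "eval N (mul_var a c) X = (\<Sum>M\<in>?A. mul_var a c M * mon N M X)"
      by (intro eval_superset[OF fin]) auto
    then show "(\<Sum>M\<in>?A. mul_var a c M * mon N M X) = X a * eval N c X"
      using eval_mul_var[OF assms] a by simp
  qed
  also have "\<dots> = (\<Sum>a<N. X a) * eval N c X" by (simp add: sum_distrib_right)
  finally show ?thesis .
qed

lemma mul_sum_Suc: "mul_sum (Suc N) c M = mul_var 0 c M + (\<Sum>a<N. mul_var (Suc a) c M)"
  unfolding mul_sum_def by (rule sum.lessThan_Suc_shift)

lemma mul_sum_nonzero_source:
  assumes "mul_sum (Suc N) c M \<noteq> 0"
  shows "\<exists>a<Suc N. 1 \<le> M a \<and> c (M(a := M a - 1)) \<noteq> 0"
proof -
  obtain a where "a < Suc N" "mul_var a c M \<noteq> 0"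
    using assms unfolding mul_sum_def by (metis (no_types, lifting) lessThan_iff sum.neutral)
  then show ?thesis by (auto simp: mul_var_def split: if_splits)
qed

text \<open>The linear form X_0 + ... + X_N is not a zero divisor: compare coefficients at an
  exponent of c of maximal X_0-degree, raised by one in X_0.\<close>
lemma mul_sum_eq_zero_imp_zero:
  assumes fin: "finite (supp c)" and zero: "\<And>M. mul_sum (Suc N) c M = 0"
  shows "c M = 0"
proof (rule ccontr)
  assume "c M \<noteq> 0"
  then have ne: "supp c \<noteq> {}" by (auto simp: supp_def)
  define top where "top = Max ((\<lambda>M. M 0) ` supp c)"
  have "top \<in> (\<lambda>M. M 0) ` supp c" unfolding top_def using fin ne by (intro Max_in) auto
  then obtain M0 where M0: "M0 \<in> supp c" "M0 0 = top" by auto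
  have le: "M' 0 \<le> top" if "M' \<in> supp c" for M'
    unfolding top_def using fin that by (intro Max_ge) auto
  let ?U = "M0(0 := Suc (M0 0))"
  have "mul_var (Suc a) c ?U = 0" for a
  proof -
    have "?U(Suc a := ?U (Suc a) - 1) \<notin> supp c"
      using le[of "?U(Suc a := ?U (Suc a) - 1)"] M0 by auto
    then show ?thesis by (simp add: mul_var_def supp_def)
  qed
  moreover have "mul_var 0 c ?U = c M0" by (simp add: mul_var_def)
  ultimately have "mul_sum (Suc N) c ?U = c M0" unfolding mul_sum_Suc by simp
  then show False using zero M0(1) by (simp add: supp_def)
qed

section \<open>Division by the linear form in the variable X_0\<close>

definition homog_exp :: "nat \<Rightarrow> nat \<Rightarrow> (nat \<Rightarrow> nat) \<Rightarrow> bool" where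
  "homog_exp n k M \<longleftrightarrow> (\<forall>i>n. M i = 0) \<and> (\<Sum>i<Suc n. M i) = k"

definition homogeneous :: "nat \<Rightarrow> nat \<Rightarrow> ((nat \<Rightarrow> nat) \<Rightarrow> real) \<Rightarrow> bool" where
  "homogeneous n d F \<longleftrightarrow> (\<forall>M. F M \<noteq> 0 \<longrightarrow> homog_exp n d M)"

lemma sum_upd:
  fixes f :: "nat \<Rightarrow> nat"
  assumes "a < N"
  shows "(\<Sum>i<N. (f(a := v)) i) + f a = (\<Sum>i<N. f i) + v"
proof -
  have "(\<Sum>i<N. (f(a := v)) i) = v + (\<Sum>i\<in>{..<N} - {a}. f i)"
    using assms by (simp add: sum.remove[of _ a])
  moreover have "(\<Sum>i<N. f i) = f a + (\<Sum>i\<in>{..<N} - {a}. f i)"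
    using assms by (simp add: sum.remove[of _ a])
  ultimately show ?thesis by simp
qed

lemma homog_exp_decr:
  assumes "homog_exp n k M" "a < Suc n" "1 \<le> M a"
  shows "homog_exp n (k - 1) (M(a := M a - 1))"
proof -
  have "(\<Sum>i<Suc n. (M(a := M a - 1)) i) + M a = (\<Sum>i<Suc n. M i) + (M a - 1)"
    using sum_upd[OF assms(2)] by blast
  then show ?thesis using assms unfolding homog_exp_def by auto
qed

lemma homog_exp_incr:
  assumes "homog_exp n k M" "a < Suc n"
  shows "homog_exp n (Suc k) (M(a := Suc (M a)))"
proof -
  have "(\<Sum>i<Suc n. (M(a := Suc (M a))) i) + M a = (\<Sum>i<Suc n. M i) + Suc (M a)"
    using sum_upd[OF assms(2)] by blast
  then show ?thesis using assms by (auto simp: homog_exp_def)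
qed

text \<open>Quotient of F by X_0 + ... + X_n, determined coefficientwise by descending
  recursion on the X_0-degree: the coefficient at M is whatever X_0 * Q must contribute
  at M + e_0 after the contributions X_a * Q (a >= 1), which have higher X_0-degree.\<close>
function div_S :: "nat \<Rightarrow> nat \<Rightarrow> ((nat \<Rightarrow> nat) \<Rightarrow> real) \<Rightarrow> (nat \<Rightarrow> nat) \<Rightarrow> real" where
  "div_S n d F M = (if M 0 < d then F (M(0 := Suc (M 0)))
     - (\<Sum>a<n. if 1 \<le> M (Suc a)
               then div_S n d F ((M(0 := Suc (M 0)))(Suc a := M (Suc a) - 1)) else 0)
     else 0)"
  by pat_completeness auto
termination by (relation "measure (\<lambda>(n, d, F, M). d - M 0)") auto

declare div_S.simps[simp del]

lemma div_S_X0_large: "d \<le> M 0 \<Longrightarrow> div_S n d F M = 0"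
  by (subst div_S.simps) simp

lemma div_S_homogeneous:
  "homogeneous n d F \<Longrightarrow> div_S n d F M \<noteq> 0 \<Longrightarrow> homog_exp n (d - 1) M"
proof (induction n d F M rule: div_S.induct)
  case (1 n d F M)
  let ?M1 = "M(0 := Suc (M 0))"
  let ?M2 = "\<lambda>a. ?M1(Suc a := M (Suc a) - 1)"
  have lt: "M 0 < d" using "1.prems"(2) by (subst (asm) div_S.simps) (auto split: if_splits)
  have s1: "(\<Sum>i<Suc n. ?M1 i) = Suc (\<Sum>i<Suc n. M i)"
    using sum_upd[of 0 "Suc n" M "Suc (M 0)"] by simp
  have "F ?M1 \<noteq> 0 \<or> (\<exists>a<n. 1 \<le> M (Suc a) \<and> div_S n d F (?M2 a) \<noteq> 0)"
  proof (rule ccontr)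
    assume "\<not> ?thesis"
    then have "F ?M1 = 0" "\<forall>a<n. (if 1 \<le> M (Suc a) then div_S n d F (?M2 a) else 0) = 0"
      by auto
    then have "div_S n d F M = 0" by (subst div_S.simps) (simp add: lt)
    then show False using "1.prems"(2) by simp
  qed
  then show ?case
  proof
    assume "F ?M1 \<noteq> 0"
    then have "homog_exp n d ?M1" using "1.prems"(1) by (simp add: homogeneous_def)
    then show ?thesis using s1 by (auto simp: homog_exp_def)
  next
    assume "\<exists>a<n. 1 \<le> M (Suc a) \<and> div_S n d F (?M2 a) \<noteq> 0"
    then obtain a where a: "a < n" "1 \<le> M (Suc a)" "div_S n d F (?M2 a) \<noteq> 0" by blast
    have IH: "homog_exp n (d - 1) (?M2 a)"
      using "1.IH"[of a] a lt "1.prems"(1) by blast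
    have s2: "(\<Sum>i<Suc n. ?M2 a i) + M (Suc a) = (\<Sum>i<Suc n. ?M1 i) + (M (Suc a) - 1)"
      using sum_upd[of "Suc a" "Suc n" ?M1 "M (Suc a) - 1"] a by simp
    have "\<forall>i>n. M i = 0"
    proof (intro allI impI)
      fix i assume "n < i"
      then show "M i = 0" using IH a by (auto simp: homog_exp_def split: if_splits dest!: spec[of _ i])
    qed
    moreover have "(\<Sum>i<Suc n. ?M2 a i) = (\<Sum>i<Suc n. M i)" using s1 s2 a by linarith
    ultimately show ?thesis using IH by (simp add: homog_exp_def)
  qed
qed

lemma is_poly_div_S:
  assumes "homogeneous n d F"
  shows "is_poly (Suc n) (div_S n d F)"
proof -
  have "supp (div_S n d F) \<subseteq> {M. \<forall>x. (x \<in> {..n} \<longrightarrow> M x \<in> {..d}) \<and> (x \<notin> {..n} \<longrightarrow> M x = 0)}"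
  proof (intro subsetI CollectI allI conjI impI)
    fix M x assume "M \<in> supp (div_S n d F)"
    then have M: "homog_exp n (d - 1) M"
      using div_S_homogeneous[OF assms] by (simp add: supp_def)
    { assume "x \<in> {..n}"
      then have "M x \<le> (\<Sum>i<Suc n. M i)" by (intro member_le_sum) auto
      then show "M x \<in> {..d}" using M by (auto simp: homog_exp_def) }
    { assume "x \<notin> {..n}" then show "M x = 0" using M by (auto simp: homog_exp_def) }
  qed
  then have "finite (supp (div_S n d F))"
    by (rule finite_subset) (intro finite_set_of_finite_funs; simp)
  moreover have "\<forall>M\<in>supp (div_S n d F). \<forall>i\<ge>Suc n. M i = 0"
    using div_S_homogeneous[OF assms] by (auto simp: supp_def homog_exp_def)
  ultimately show ?thesis by (simp add: is_poly_def)
qed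

lemma mul_sum_div_S:
  assumes hom: "homogeneous n d F" and M0: "1 \<le> M 0"
  shows "mul_sum (Suc n) (div_S n d F) M = F M"
proof -
  let ?q = "div_S n d F"
  let ?M' = "M(0 := M 0 - 1)"
  let ?rest = "\<Sum>a<n. if 1 \<le> M (Suc a) then ?q (M(Suc a := M (Suc a) - 1)) else 0"
  have split: "mul_sum (Suc n) ?q M = ?q ?M' + ?rest"
    unfolding mul_sum_Suc using M0 by (simp add: mul_var_def)
  show ?thesis
  proof (cases "M 0 \<le> d")
    case True
    have up: "?M'(0 := Suc (?M' 0)) = M" using M0 by auto
    have up_decr: "(?M'(0 := Suc (?M' 0)))(Suc a := ?M' (Suc a) - 1) = M(Suc a := M (Suc a) - 1)" for a
      using M0 by (auto simp: fun_eq_iff)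
    have "?q ?M' = F (?M'(0 := Suc (?M' 0))) - (\<Sum>a<n. if 1 \<le> ?M' (Suc a)
           then ?q ((?M'(0 := Suc (?M' 0)))(Suc a := ?M' (Suc a) - 1)) else 0)"
      using True M0 by (subst div_S.simps) simp
    also have "\<dots> = F M - ?rest"
      unfolding up_decr up by (intro arg_cong2[where f="(-)"] refl sum.cong) auto
    finally show ?thesis using split by simp
  next
    case False
    have "?q ?M' = 0" using False by (intro div_S_X0_large) simp
    moreover have "?rest = 0" using False by (intro sum.neutral) (auto intro!: div_S_X0_large)
    moreover have "F M = 0"
    proof (rule ccontr)
      assume "F M \<noteq> 0"
      then have "(\<Sum>i<Suc n. M i) = d" using hom by (simp add: homogeneous_def homog_exp_def)
      moreover have "M 0 \<le> (\<Sum>i<Suc n. M i)" by (intro member_le_sum) auto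
      ultimately show False using False by simp
    qed
    ultimately show ?thesis using split by simp
  qed
qed

section \<open>The coefficients of the induced polynomial P\<close>

definition hom_exp :: "nat \<Rightarrow> nat \<Rightarrow> (nat \<Rightarrow> nat) \<Rightarrow> (nat \<Rightarrow> nat)" where
  "hom_exp n d m = (\<lambda>i. if i = 0 then d - deg n m else m (i - 1))"

definition dehom_exp :: "nat \<Rightarrow> (nat \<Rightarrow> nat) \<Rightarrow> (nat \<Rightarrow> nat)" where
  "dehom_exp n M = (\<lambda>i. if i < n then M (Suc i) else 0)"

definition X0_exp :: "nat \<Rightarrow> (nat \<Rightarrow> nat)" where
  "X0_exp d = (\<lambda>i. if i = 0 then d else 0)"

text \<open>Coefficients of sum_k p_k (-X_0)^(d-k), of (-X_0)^d, and of their difference P.\<close>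
definition P_hom :: "nat \<Rightarrow> nat \<Rightarrow> ((nat \<Rightarrow> nat) \<Rightarrow> real) \<Rightarrow> (nat \<Rightarrow> nat) \<Rightarrow> real" where
  "P_hom n d p M = (if M \<in> hom_exp n d ` supp p then p (dehom_exp n M) * (-1) ^ (M 0) else 0)"

definition P_X0 :: "nat \<Rightarrow> (nat \<Rightarrow> nat) \<Rightarrow> real" where
  "P_X0 d M = (if M = X0_exp d then (-1) ^ d else 0)"

definition P_coeff :: "nat \<Rightarrow> nat \<Rightarrow> ((nat \<Rightarrow> nat) \<Rightarrow> real) \<Rightarrow> (nat \<Rightarrow> nat) \<Rightarrow> real" where
  "P_coeff n d p M = P_hom n d p M - P_X0 d M"

lemma hom_exp_inj: "inj (hom_exp n d)"
proof (rule injI)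
  fix m m' assume h: "hom_exp n d m = hom_exp n d m'"
  show "m = m'"
  proof
    fix i show "m i = m' i" using fun_cong[OF h, of "Suc i"] by (simp add: hom_exp_def)
  qed
qed

lemma mon_hom_exp:
  "mon (Suc n) (hom_exp n d m) X = X 0 ^ (d - deg n m) * (\<Prod>i<n. X (Suc i) ^ m i)"
  unfolding mon_def prod.lessThan_Suc_shift by (simp add: hom_exp_def)

lemma supp_P_hom: "supp (P_hom n d p) \<subseteq> hom_exp n d ` supp p"
  by (auto simp: supp_def P_hom_def split: if_splits)

lemma eval_P_X0: "eval (Suc n) (P_X0 d) X = (- X 0) ^ d"
proof -
  have "eval (Suc n) (P_X0 d) X = (\<Sum>M\<in>{X0_exp d}. P_X0 d M * mon (Suc n) M X)"
    by (rule eval_superset) (auto simp: supp_def P_X0_def split: if_splits)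
  also have "\<dots> = (-1) ^ d * X 0 ^ d"
    unfolding mon_def prod.lessThan_Suc_shift by (simp add: P_X0_def X0_exp_def)
  finally show ?thesis by (simp only: power_minus[of "X 0"])
qed

lemma finite_supp_P_X0: "finite (supp (P_X0 d))"
  by (rule finite_subset[of _ "{X0_exp d}"]) (auto simp: supp_def P_X0_def split: if_splits)

lemma mul_sum_X0_exp:
  assumes "1 \<le> d"
  shows "mul_sum (Suc n) c (X0_exp d) = c ((X0_exp d)(0 := d - 1))"
  unfolding mul_sum_Suc using assms by (simp add: mul_var_def X0_exp_def)

locale H_poly =
  fixes n d :: nat and p :: "(nat \<Rightarrow> nat) \<Rightarrow> real"
  assumes d_pos: "d \<ge> 1" and H: "H n d p"
begin

lemma finite_supp_p: "finite (supp p)" using H by (simp add: H_def is_poly_def)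

lemma supp_p_vars: "m \<in> supp p \<Longrightarrow> i \<ge> n \<Longrightarrow> m i = 0"
  using H by (simp add: H_def is_poly_def)

lemma p_nonneg: "p m \<ge> 0" using H by (simp add: H_def)

lemma p_on_simplex: "(\<Sum>i<n. x i) = 1 \<Longrightarrow> eval n p x = 1" using H by (simp add: H_def)

lemma deg_le: "m \<in> supp p \<Longrightarrow> deg n m \<le> d"
proof -
  assume "m \<in> supp p"
  then have "deg n m \<le> Max (deg n ` supp p)" using finite_supp_p by (intro Max_ge) auto
  then show ?thesis using H by (simp add: H_def total_degree_def)
qed

lemma top_degree_term: "\<exists>m\<in>supp p. deg n m = d"
proof -
  have "Max (deg n ` supp p) \<in> deg n ` supp p"
    using H finite_supp_p by (intro Max_in) (auto simp: H_def)
  then show ?thesis using H unfolding H_def total_degree_def by auto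
qed

lemma n_pos: "n \<ge> 1"
proof (rule ccontr)
  assume "\<not> n \<ge> 1"
  then have "n = 0" by simp
  obtain m where "m \<in> supp p" "deg n m = d" using top_degree_term by blast
  then show False using \<open>n = 0\<close> d_pos by (simp add: deg_def)
qed

text \<open>p is not the constant 1: otherwise p(1/n, ..., 1/n) = 1 forces all other
  (nonnegative) coefficients to vanish, contradicting d >= 1.\<close>
lemma p_const_ne_1: "p (\<lambda>_. 0) \<noteq> 1"
proof
  assume const: "p (\<lambda>_. 0) = 1"
  define x :: "nat \<Rightarrow> real" where "x = (\<lambda>_. 1 / real n)"
  have "(\<Sum>i<n. x i) = 1" using n_pos by (simp add: x_def)
  then have ev: "eval n p x = 1" by (rule p_on_simplex)
  have zero: "(\<lambda>_. 0) \<in> supp p" using const by (simp add: supp_def)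
  have term_value: "p m * mon n m x = p m * (1 / real n) ^ deg n m" for m
    by (simp add: mon_def x_def deg_def power_sum)
  have "eval n p x = p (\<lambda>_. 0) + (\<Sum>m\<in>supp p - {\<lambda>_. 0}. p m * mon n m x)"
    unfolding eval_superset[OF finite_supp_p subset_refl] using finite_supp_p zero
    by (simp add: sum.remove mon_def)
  then have "(\<Sum>m\<in>supp p - {\<lambda>_. 0}. p m * (1 / real n) ^ deg n m) = 0"
    using ev const by (simp add: term_value)
  then have "\<forall>m\<in>supp p - {\<lambda>_. 0}. p m * (1 / real n) ^ deg n m = 0"
    using finite_supp_p by (subst sum_nonneg_eq_0_iff[symmetric]) (auto intro: mult_nonneg_nonneg p_nonneg)
  then have "supp p = {\<lambda>_. 0}" using n_pos zero by (auto simp: supp_def)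
  then show False using H d_pos by (simp add: H_def total_degree_def deg_def)
qed

lemma dehom_hom_exp: "m \<in> supp p \<Longrightarrow> dehom_exp n (hom_exp n d m) = m"
  by (auto simp: dehom_exp_def hom_exp_def supp_p_vars)

lemma P_hom_hom_exp:
  assumes m: "m \<in> supp p"
  shows "P_hom n d p (hom_exp n d m) = p m * (-1) ^ (d - deg n m)"
proof -
  have "hom_exp n d m \<in> hom_exp n d ` supp p" using m by blast
  then have "P_hom n d p (hom_exp n d m) = p (dehom_exp n (hom_exp n d m)) * (-1) ^ (hom_exp n d m 0)"
    unfolding P_hom_def by (rule if_P)
  moreover have "hom_exp n d m 0 = d - deg n m" by (simp add: hom_exp_def)
  ultimately show ?thesis using dehom_hom_exp[OF m] by simp
qed

lemma finite_supp_P_hom: "finite (supp (P_hom n d p))"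
  by (rule finite_subset[OF supp_P_hom]) (use finite_supp_p in simp)

lemma eval_P_hom: "eval (Suc n) (P_hom n d p) X =
   (\<Sum>m\<in>supp p. p m * (\<Prod>i<n. X (Suc i) ^ m i) * (- X 0) ^ (d - deg n m))"
proof -
  have "eval (Suc n) (P_hom n d p) X =
        (\<Sum>M\<in>hom_exp n d ` supp p. P_hom n d p M * mon (Suc n) M X)"
    by (rule eval_superset[OF _ supp_P_hom]) (use finite_supp_p in auto)
  also have "\<dots> = (\<Sum>m\<in>supp p. P_hom n d p (hom_exp n d m) * mon (Suc n) (hom_exp n d m) X)"
    by (subst sum.reindex) (auto intro!: inj_on_subset[OF hom_exp_inj])
  also have "\<dots> = (\<Sum>m\<in>supp p. p m * (\<Prod>i<n. X (Suc i) ^ m i) * (- X 0) ^ (d - deg n m))"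
    by (intro sum.cong refl)
       (simp add: P_hom_hom_exp mon_hom_exp power_minus[of "X 0"] mult_ac)
  finally show ?thesis .
qed

lemma eval_P_coeff: "eval (Suc n) (P_coeff n d p) X = induced n d p X"
  unfolding P_coeff_def eval_diff[OF finite_supp_P_hom finite_supp_P_X0] eval_P_hom eval_P_X0
    induced_def by simp

lemma supp_P_coeff: "supp (P_coeff n d p) \<subseteq> hom_exp n d ` supp p \<union> {X0_exp d}"
  using supp_P_hom by (auto simp: supp_def P_coeff_def P_X0_def split: if_splits)

lemma homogeneous_P_coeff: "homogeneous n d (P_coeff n d p)"
  unfolding homogeneous_def
proof (intro allI impI)
  fix M assume "P_coeff n d p M \<noteq> 0"
  then have "M \<in> hom_exp n d ` supp p \<union> {X0_exp d}" using supp_P_coeff by (auto simp: supp_def)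
  then show "homog_exp n d M"
  proof
    assume "M \<in> hom_exp n d ` supp p"
    then obtain m where m: "m \<in> supp p" "M = hom_exp n d m" by auto
    have "(\<Sum>i<Suc n. M i) = (d - deg n m) + deg n m"
      unfolding m(2) sum.lessThan_Suc_shift by (simp add: hom_exp_def deg_def)
    then show ?thesis using m deg_le[OF m(1)] by (auto simp: homog_exp_def hom_exp_def supp_p_vars)
  qed (auto simp: homog_exp_def X0_exp_def)
qed

lemma finite_supp_P_coeff: "finite (supp (P_coeff n d p))"
  by (rule finite_subset[OF supp_P_coeff]) (use finite_supp_p in simp)

lemma is_poly_P_coeff: "is_poly (Suc n) (P_coeff n d p)"
  using finite_supp_P_coeff homogeneous_P_coeff
  unfolding is_poly_def homogeneous_def homog_exp_def supp_def by auto

text \<open>The coefficient of X_0^d in P is (-1)^d (p(0) - 1), which is nonzero.\<close>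
lemma P_coeff_X0_exp: "P_coeff n d p (X0_exp d) \<noteq> 0"
proof -
  have X0: "X0_exp d = hom_exp n d (\<lambda>_. 0)" by (auto simp: X0_exp_def hom_exp_def deg_def)
  have "P_coeff n d p (X0_exp d) = (-1) ^ d * (p (\<lambda>_. 0) - 1)"
  proof (cases "(\<lambda>_. 0) \<in> supp p")
    case True
    then show ?thesis
      using P_hom_hom_exp[OF True] by (simp add: P_coeff_def P_X0_def X0 deg_def algebra_simps)
  next
    case False
    moreover have "X0_exp d \<notin> hom_exp n d ` supp p"
    proof
      assume "X0_exp d \<in> hom_exp n d ` supp p"
      then obtain m where m: "m \<in> supp p" "X0_exp d = hom_exp n d m" by auto
      have "dehom_exp n (X0_exp d) = (\<lambda>_. 0)" by (auto simp: dehom_exp_def X0_exp_def)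
      then have "m = (\<lambda>_. 0)" using m dehom_hom_exp by metis
      then show False using False m(1) by simp
    qed
    ultimately show ?thesis by (simp add: P_coeff_def P_hom_def P_X0_def supp_def)
  qed
  then show ?thesis using p_const_ne_1 by simp
qed

lemma P_coeff_hom_exp:
  assumes m: "m \<in> supp p" and ne: "hom_exp n d m \<noteq> X0_exp d"
  shows "P_coeff n d p (hom_exp n d m) = p m * (-1) ^ (d - deg n m)"
  using P_hom_hom_exp[OF m] ne by (simp add: P_coeff_def P_X0_def)

text \<open>At the point (-n, 1, ..., 1), where S vanishes, every term of P other than
  X_0^d is positive.\<close>
lemma P_term_pos:
  assumes nz: "P_coeff n d p M \<noteq> 0" and ne: "M \<noteq> X0_exp d"
  shows "P_coeff n d p M * mon (Suc n) M (\<lambda>i. if i = 0 then - real n else 1) > 0"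
proof -
  obtain m where m: "m \<in> supp p" "M = hom_exp n d m" using nz ne supp_P_coeff by (auto simp: supp_def)
  have "p m > 0" using m p_nonneg[of m] by (simp add: supp_def order_le_less)
  have "P_coeff n d p M * mon (Suc n) M (\<lambda>i. if i = 0 then - real n else 1)
        = p m * ((-1) ^ (d - deg n m) * (- real n) ^ (d - deg n m))"
    using P_coeff_hom_exp[OF m(1)] m ne by (simp add: mon_hom_exp)
  also have "\<dots> = p m * real n ^ (d - deg n m)" by (simp add: power_mult_distrib[symmetric])
  also have "\<dots> > 0" using \<open>p m > 0\<close> n_pos by simp
  finally show ?thesis .
qed

text \<open>P vanishes on the part of {S = 0} where X_1 + ... + X_n is nonzero: there
  P = s^d (p(x) - 1) with s = X_1 + ... + X_n and x = (X_1, ..., X_n) / s.\<close>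
lemma induced_vanishes_generic:
  assumes "X 0 = - (\<Sum>i<n. X (Suc i))" "(\<Sum>i<n. X (Suc i)) \<noteq> 0"
  shows "induced n d p X = 0"
proof -
  define s where "s = (\<Sum>i<n. X (Suc i))"
  define x where "x = (\<lambda>i. X (Suc i) / s)"
  have "(\<Sum>i<n. x i) = 1" using assms by (simp add: x_def s_def sum_divide_distrib[symmetric])
  then have "eval n p x = 1" by (rule p_on_simplex)
  moreover have "eval n p x = (\<Sum>m\<in>supp p. p m * (\<Prod>i<n. X (Suc i) ^ m i) / s ^ deg n m)"
    unfolding eval_def x_def by (simp add: power_divide prod_dividef deg_def power_sum)
  ultimately have on_simplex: "(\<Sum>m\<in>supp p. p m * (\<Prod>i<n. X (Suc i) ^ m i) / s ^ deg n m) = 1"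
    by simp
  have "induced n d p X = (\<Sum>m\<in>supp p. p m * (\<Prod>i<n. X (Suc i) ^ m i) * s ^ (d - deg n m)) - s ^ d"
    unfolding induced_def using assms by (simp add: s_def)
  also have "\<dots> = s ^ d * (\<Sum>m\<in>supp p. p m * (\<Prod>i<n. X (Suc i) ^ m i) / s ^ deg n m) - s ^ d"
    unfolding sum_distrib_left
    using deg_le assms by (intro arg_cong2[where f="(-)"] sum.cong refl) (simp add: power_diff s_def)
  also have "\<dots> = 0" using on_simplex by simp
  finally show ?thesis .
qed

text \<open>P vanishes on all of {S = 0}; the remaining points are limits of generic ones.\<close>
lemma induced_vanishes:
  assumes "S n X = 0"
  shows "induced n d p X = 0"
proof (cases "(\<Sum>i<n. X (Suc i)) = 0")
  case False
  moreover have "X 0 = - (\<Sum>i<n. X (Suc i))"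
    using assms unfolding S_def sum.lessThan_Suc_shift by simp
  ultimately show ?thesis by (intro induced_vanishes_generic)
next
  case True
  define v :: "nat \<Rightarrow> real" where "v = (\<lambda>i. if i = 0 then -1 else if i = 1 then 1 else 0)"
  define f where "f t = induced n d p (\<lambda>i. X i + t * v i)" for t
  have X0: "X 0 = 0" using assms True unfolding S_def sum.lessThan_Suc_shift by simp
  have "(\<Sum>i<n. v (Suc i)) = (\<Sum>i<n. if i = 0 then 1 else 0)" by (intro sum.cong) (auto simp: v_def)
  then have sum_v: "(\<Sum>i<n. v (Suc i)) = 1" using n_pos by simp
  have "f t = 0" if "t \<noteq> 0" for t
    unfolding f_def
    by (rule induced_vanishes_generic)
       (use that True X0 sum_v in \<open>simp_all add: sum.distrib sum_distrib_left[symmetric] v_def\<close>)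
  then have "eventually (\<lambda>t. f t = 0) (at (0::real))"
    by (auto simp: eventually_at_filter)
  then have lim0: "(f \<longlongrightarrow> 0) (at 0)" by (rule tendsto_eventually)
  have "isCont f 0" unfolding f_def induced_def by (intro continuous_intros)
  then have "(f \<longlongrightarrow> f 0) (at 0)" by (simp add: isCont_def)
  then have "f 0 = 0" using tendsto_unique[OF _ _ lim0] by simp
  then show ?thesis by (simp add: f_def)
qed

end

section \<open>The quotient Q = P / S\<close>

context H_poly
begin

lemma eval_P_minus_S_times:
  assumes "is_poly (Suc n) q"
  shows "eval (Suc n) (\<lambda>M. P_coeff n d p M - mul_sum (Suc n) q M) X
         = induced n d p X - S n X * eval (Suc n) q X"
proof -
  have fin: "finite (supp q)" using assms by (simp add: is_poly_def)
  show ?thesis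
    unfolding eval_diff[OF finite_supp_P_coeff finite_supp_mul_sum[OF fin]] eval_P_coeff
      eval_mul_sum[OF fin] S_def ..
qed

text \<open>The recursive quotient divides P exactly: the remainder is free of X_0 and, like
  P - S * Q, vanishes on {S = 0}; choosing X_0 freely, it vanishes everywhere.\<close>
lemma mul_sum_div_S_P: "mul_sum (Suc n) (div_S n d (P_coeff n d p)) M = P_coeff n d p M"
proof -
  let ?q = "div_S n d (P_coeff n d p)"
  define R where "R M = P_coeff n d p M - mul_sum (Suc n) ?q M" for M
  have is_poly_q: "is_poly (Suc n) ?q" by (rule is_poly_div_S[OF homogeneous_P_coeff])
  have is_poly_R: "is_poly (Suc n) R"
    unfolding R_def by (intro is_poly_diff is_poly_P_coeff is_poly_mul_sum is_poly_q)
  have R_X0_free: "M 0 = 0" if "M \<in> supp R" for M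
    using that mul_sum_div_S[OF homogeneous_P_coeff, of M]
    by (cases "M 0") (auto simp: supp_def R_def)
  have "eval (Suc n) R X = 0" for X
  proof -
    let ?X = "X(0 := - (\<Sum>i<n. X (Suc i)))"
    have S0: "S n ?X = 0" unfolding S_def sum.lessThan_Suc_shift by simp
    have "eval (Suc n) R X = eval (Suc n) R ?X"
      unfolding eval_def
    proof (intro sum.cong refl)
      fix M assume "M \<in> supp R"
      then have "M 0 = 0" by (rule R_X0_free)
      then show "R M * (\<Prod>i<Suc n. X i ^ M i) = R M * (\<Prod>i<Suc n. ?X i ^ M i)"
        unfolding prod.lessThan_Suc_shift by simp
    qed
    also have "\<dots> = induced n d p ?X - S n ?X * eval (Suc n) ?q ?X"
      unfolding R_def by (rule eval_P_minus_S_times[OF is_poly_q])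
    also have "\<dots> = 0" using S0 induced_vanishes[OF S0] by simp
    finally show ?thesis .
  qed
  then have "R M = 0" by (intro eval_zero_imp_coeff_zero[OF is_poly_R])
  then show ?thesis by (simp add: R_def)
qed

lemma quotient_exists: "is_quotient n d p (div_S n d (P_coeff n d p))"
proof -
  let ?q = "div_S n d (P_coeff n d p)"
  have is_poly_q: "is_poly (Suc n) ?q" by (rule is_poly_div_S[OF homogeneous_P_coeff])
  have "induced n d p X = S n X * eval (Suc n) ?q X" for X
  proof -
    have "eval (Suc n) (\<lambda>M. P_coeff n d p M - mul_sum (Suc n) ?q M) X = 0"
      by (simp add: mul_sum_div_S_P eval_def supp_def)
    then show ?thesis using eval_P_minus_S_times[OF is_poly_q] by simp
  qed
  then show ?thesis using is_poly_q by (simp add: is_quotient_def)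
qed

lemma quotient_coeffs:
  assumes "is_quotient n d p q"
  shows "mul_sum (Suc n) q M = P_coeff n d p M"
proof -
  have is_poly_q: "is_poly (Suc n) q" using assms by (simp add: is_quotient_def)
  have fin: "finite (supp q)" using is_poly_q by (simp add: is_poly_def)
  have "eval (Suc n) (mul_sum (Suc n) q) X = eval (Suc n) (P_coeff n d p) X" for X
  proof -
    have "eval (Suc n) (mul_sum (Suc n) q) X = S n X * eval (Suc n) q X"
      unfolding S_def by (rule eval_mul_sum[OF fin])
    also have "\<dots> = induced n d p X" using assms unfolding is_quotient_def by simp
    also have "\<dots> = eval (Suc n) (P_coeff n d p) X" by (rule eval_P_coeff[symmetric])
    finally show ?thesis .
  qed
  then show ?thesis
    by (rule coeffs_eq_if_evals_eq[OF is_poly_mul_sum[OF is_poly_q] is_poly_P_coeff])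
qed

text \<open>An S-multiple whose nonzero coefficients are coefficients of P other than the
  one of X_0^d vanishes: at (-n, 1, ..., 1) it evaluates to 0, but to a sum of positive
  terms if it had any.\<close>
lemma mul_sum_vanishes_if_matches_P:
  assumes fin: "finite (supp c)"
    and match: "\<And>M. mul_sum (Suc n) c M \<noteq> 0 \<Longrightarrow> mul_sum (Suc n) c M = P_coeff n d p M"
    and X0: "mul_sum (Suc n) c (X0_exp d) = 0"
  shows "mul_sum (Suc n) c M = 0"
proof (rule ccontr)
  assume nz: "mul_sum (Suc n) c M \<noteq> 0"
  define Z :: "nat \<Rightarrow> real" where "Z = (\<lambda>i. if i = 0 then - real n else 1)"
  have "(\<Sum>a<Suc n. Z a) = 0" unfolding sum.lessThan_Suc_shift by (simp add: Z_def)
  then have zero: "eval (Suc n) (mul_sum (Suc n) c) Z = 0" using eval_mul_sum[OF fin] by simp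
  have pos: "mul_sum (Suc n) c M' * mon (Suc n) M' Z > 0"
    if "M' \<in> supp (mul_sum (Suc n) c)" for M'
  proof -
    have nz': "mul_sum (Suc n) c M' \<noteq> 0" using that by (simp add: supp_def)
    then have "M' \<noteq> X0_exp d" using X0 by auto
    then show ?thesis using P_term_pos[of M'] match[OF nz'] nz' by (simp add: Z_def)
  qed
  have "M \<in> supp (mul_sum (Suc n) c)" using nz by (simp add: supp_def)
  then have "eval (Suc n) (mul_sum (Suc n) c) Z > 0"
    unfolding eval_superset[OF finite_supp_mul_sum[OF fin] subset_refl]
    using finite_supp_mul_sum[OF fin] pos by (intro sum_pos) auto
  then show False using zero by simp
qed

end

section \<open>Coordinates of the Newton diagram\<close>

text \<open>The diagram point m stands for the exponent (d - 1 - |m|, m_1, ..., m_n) of Q; it is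
  admissible when this exponent is nonnegative.\<close>
definition diagram_exp :: "nat \<Rightarrow> nat \<Rightarrow> (nat \<Rightarrow> int) \<Rightarrow> (nat \<Rightarrow> nat)" where
  "diagram_exp n d m = (\<lambda>j. if j = 0 then nat (int d - 1 - absZ n m)
                            else if j \<le> n then nat (m (j - 1)) else 0)"

definition diagram_point :: "nat \<Rightarrow> (nat \<Rightarrow> nat) \<Rightarrow> (nat \<Rightarrow> int)" where
  "diagram_point n M = (\<lambda>i. if i < n then int (M (Suc i)) else 0)"

definition admissible :: "nat \<Rightarrow> nat \<Rightarrow> (nat \<Rightarrow> int) \<Rightarrow> bool" where
  "admissible n d m \<longleftrightarrow> (\<forall>i<n. m i \<ge> 0) \<and> int d - 1 - absZ n m \<ge> 0"

lemma newton_support_iff: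
  "m \<in> newton_support n d q \<longleftrightarrow> m \<in> Zn n \<and> admissible n d m \<and> q (diagram_exp n d m) \<noteq> 0"
  unfolding newton_support_def newton_diagram_def newton_coeff_def admissible_def diagram_exp_def
  by (auto split: if_splits)

lemma absZ_diagram_point: "absZ n (diagram_point n M) = int (\<Sum>i<n. M (Suc i))"
  unfolding absZ_def diagram_point_def by simp

lemma diagram_point_exp:
  assumes "m \<in> Zn n" "admissible n d m"
  shows "diagram_point n (diagram_exp n d m) = m"
  using assms by (auto simp: fun_eq_iff diagram_point_def diagram_exp_def Zn_def admissible_def)

lemma diagram_exp_point:
  assumes "1 \<le> d" "homog_exp n (d - 1) M"
  shows "diagram_exp n d (diagram_point n M) = M"
    and "diagram_point n M \<in> Zn n"
    and "admissible n d (diagram_point n M)"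
proof -
  have deg: "M 0 + (\<Sum>i<n. M (Suc i)) = d - 1"
    using assms unfolding homog_exp_def sum.lessThan_Suc_shift by simp
  have X0_part: "int d - 1 - absZ n (diagram_point n M) = int (M 0)"
    unfolding absZ_diagram_point using deg assms(1) by linarith
  show "diagram_exp n d (diagram_point n M) = M"
  proof
    fix j show "diagram_exp n d (diagram_point n M) j = M j"
    proof (cases j)
      case 0 then show ?thesis using X0_part by (simp add: diagram_exp_def)
    next
      case (Suc i) then show ?thesis
        using assms by (auto simp: diagram_exp_def diagram_point_def homog_exp_def)
    qed
  qed
  show "diagram_point n M \<in> Zn n" by (simp add: Zn_def diagram_point_def)
  show "admissible n d (diagram_point n M)"
    using X0_part unfolding admissible_def by (auto simp: diagram_point_def)
qed

lemma homog_exp_diagram_exp: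
  assumes "m \<in> Zn n" "admissible n d m"
  shows "homog_exp n (d - 1) (diagram_exp n d m)"
proof -
  have nonneg: "\<And>i. i < n \<Longrightarrow> m i \<ge> 0" "int d - 1 - absZ n m \<ge> 0"
    using assms by (auto simp: admissible_def)
  have "(\<Sum>i<n. diagram_exp n d m (Suc i)) = (\<Sum>i<n. nat (m i))"
    by (intro sum.cong) (auto simp: diagram_exp_def)
  moreover have "int (\<Sum>i<n. nat (m i)) = absZ n m" using nonneg(1) by (simp add: absZ_def)
  moreover have "int (diagram_exp n d m 0) = int d - 1 - absZ n m"
    using nonneg(2) by (simp add: diagram_exp_def)
  ultimately have "int (\<Sum>i<Suc n. diagram_exp n d m i) = int d - 1"
    unfolding sum.lessThan_Suc_shift by simp
  then have "(\<Sum>i<Suc n. diagram_exp n d m i) = d - 1" using nonneg(2) by linarith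
  then show ?thesis unfolding homog_exp_def by (simp add: diagram_exp_def)
qed

lemma adjacent_sym: "adjacent n x y \<Longrightarrow> adjacent n y x"
proof -
  assume h: "adjacent n x y"
  then have ne: "y \<noteq> x" by (auto simp: adjacent_def)
  from h consider
      (up) j where "j < n" "\<forall>i. x i - y i = (if i = j then 1 else 0)"
    | (down) j where "j < n" "\<forall>i. x i - y i = (if i = j then -1 else 0)"
    | (swap) j k where "j < n" "k < n" "j \<noteq> k"
        "\<forall>i. x i - y i = (if i = j then 1 else 0) - (if i = k then 1 else 0)"
    unfolding adjacent_def by blast
  then show ?thesis
  proof cases
    case (up j)
    have "\<forall>i. y i - x i = (if i = j then -1 else 0)"
    proof
      fix i show "y i - x i = (if i = j then -1 else 0)"
        using up(2)[rule_format, of i] by (cases "i = j") auto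
    qed
    then show ?thesis using up ne unfolding adjacent_def by blast
  next
    case (down j)
    have "\<forall>i. y i - x i = (if i = j then 1 else 0)"
    proof
      fix i show "y i - x i = (if i = j then 1 else 0)"
        using down(2)[rule_format, of i] by (cases "i = j") auto
    qed
    then show ?thesis using down ne unfolding adjacent_def by blast
  next
    case (swap j k)
    have "\<forall>i. y i - x i = (if i = k then 1 else 0) - (if i = j then 1 else 0)"
    proof
      fix i show "y i - x i = (if i = k then 1 else 0) - (if i = j then 1 else 0)"
        using swap(4)[rule_format, of i] by (cases "i = j"; cases "i = k") auto
    qed
    then show ?thesis using swap ne unfolding adjacent_def by blast
  qed
qed

text \<open>Two exponents of Q that both divide the same exponent M of S * Q (i.e. M - e_a and
  M - e_b) correspond to adjacent diagram points.\<close>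
lemma adjacent_diagram_points:
  assumes "a < Suc n" "b < Suc n" "a \<noteq> b" "1 \<le> M a" "1 \<le> M b"
  shows "adjacent n (diagram_point n (M(b := M b - 1))) (diagram_point n (M(a := M a - 1)))"
proof -
  let ?x = "diagram_point n (M(b := M b - 1))" and ?y = "diagram_point n (M(a := M a - 1))"
  have diff: "?x i - ?y i = (if Suc i = a then 1 else 0) - (if Suc i = b then 1 else 0)" for i
    using assms by (auto simp: diagram_point_def of_nat_diff)
  show ?thesis
  proof (cases "a = 0")
    case True
    then obtain j where j: "b = Suc j" using assms by (metis not0_implies_Suc)
    have "j < n" using j assms by simp
    moreover have f: "\<forall>i. ?x i - ?y i = (if i = j then -1 else 0)" using diff j True by simp
    moreover have "?x \<noteq> ?y" using f[rule_format, of j] by auto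
    ultimately show ?thesis unfolding adjacent_def by blast
  next
    case False
    then obtain j where j: "a = Suc j" by (metis not0_implies_Suc)
    have jn: "j < n" using j assms by simp
    show ?thesis
    proof (cases "b = 0")
      case True
      have f: "\<forall>i. ?x i - ?y i = (if i = j then 1 else 0)" using diff j True by simp
      moreover have "?x \<noteq> ?y" using f[rule_format, of j] by auto
      ultimately show ?thesis using jn unfolding adjacent_def by blast
    next
      case False
      then obtain k where k: "b = Suc k" by (metis not0_implies_Suc)
      have "k < n" "j \<noteq> k" using k j assms by auto
      moreover have f: "\<forall>i. ?x i - ?y i = (if i = j then 1 else 0) - (if i = k then 1 else 0)"
        using diff j k by simp
      moreover have "?x \<noteq> ?y" using f[rule_format, of j] \<open>j \<noteq> k\<close> by auto
      ultimately show ?thesis using jn unfolding adjacent_def by blast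
    qed
  qed
qed

section \<open>The support of the Newton diagram of Q\<close>

locale H_quotient = H_poly +
  fixes q :: "(nat \<Rightarrow> nat) \<Rightarrow> real"
  assumes quotient: "is_quotient n d p q"
begin

abbreviation K :: "(nat \<Rightarrow> int) set" where
  "K \<equiv> newton_support n d q"

lemma mul_sum_q: "mul_sum (Suc n) q M = P_coeff n d p M"
  by (rule quotient_coeffs[OF quotient])

lemma finite_supp_q: "finite (supp q)"
  using quotient by (simp add: is_quotient_def is_poly_def)

lemma point_in_K: "homog_exp n (d - 1) M \<Longrightarrow> q M \<noteq> 0 \<Longrightarrow> diagram_point n M \<in> K"
  using diagram_exp_point[OF d_pos, of n M] by (simp add: newton_support_iff)

lemma finite_K: "finite K"
proof -
  have "K \<subseteq> diagram_point n ` supp q"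
  proof
    fix m assume "m \<in> K"
    then have m: "m \<in> Zn n" "admissible n d m" "q (diagram_exp n d m) \<noteq> 0"
      by (auto simp: newton_support_iff)
    then have "m = diagram_point n (diagram_exp n d m)" using diagram_point_exp by simp
    then show "m \<in> diagram_point n ` supp q" using m(3) by (auto simp: supp_def)
  qed
  then show ?thesis using finite_supp_q finite_subset by blast
qed

lemma K_in_simplex: "m \<in> K \<Longrightarrow> absZ n m \<le> int d - 1 \<and> (\<forall>i<n. 0 \<le> m i)"
  by (auto simp: newton_support_iff admissible_def)

text \<open>X_0^(d-1), the only exponent of Q dividing X_0^d, has diagram point 0.\<close>
lemma X0_exp_below:
  shows "homog_exp n (d - 1) ((X0_exp d)(0 := d - 1))"
    and "diagram_point n ((X0_exp d)(0 := d - 1)) = (\<lambda>i. 0)"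
proof -
  have "(\<Sum>i<Suc n. ((X0_exp d)(0 := d - 1)) i) = d - 1"
    unfolding sum.lessThan_Suc_shift by (simp add: X0_exp_def)
  then show "homog_exp n (d - 1) ((X0_exp d)(0 := d - 1))"
    by (simp add: homog_exp_def X0_exp_def)
  show "diagram_point n ((X0_exp d)(0 := d - 1)) = (\<lambda>i. 0)"
    by (auto simp: diagram_point_def X0_exp_def fun_eq_iff)
qed

text \<open>The origin corresponds to the coefficient of X_0^(d-1) in Q, which equals the
  (nonzero) coefficient of X_0^d in P.\<close>
lemma zero_in_K: "(\<lambda>i. 0) \<in> K"
proof -
  have "q ((X0_exp d)(0 := d - 1)) \<noteq> 0"
    using P_coeff_X0_exp mul_sum_q mul_sum_X0_exp[OF d_pos] by metis
  then show ?thesis using point_in_K[OF X0_exp_below(1)] X0_exp_below(2) by simp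
qed

text \<open>A term of p of degree d gives a term of P without X_0; it is X_a times a term of Q
  with a >= 1, whose diagram point has |m| = d - 1.\<close>
lemma top_in_K: "\<exists>m\<in>K. absZ n m = int d - 1"
proof -
  obtain m where m: "m \<in> supp p" "deg n m = d" using top_degree_term by blast
  let ?M = "hom_exp n d m"
  have M0: "?M 0 = 0" using m by (simp add: hom_exp_def)
  have "?M \<noteq> X0_exp d" using M0 d_pos by (auto simp: X0_exp_def fun_eq_iff dest!: spec[of _ 0])
  then have "P_coeff n d p ?M = p m" using P_coeff_hom_exp[OF m(1)] m by simp
  then have P_nz: "P_coeff n d p ?M \<noteq> 0" using m by (simp add: supp_def)
  then have hom: "homog_exp n d ?M" using homogeneous_P_coeff by (simp add: homogeneous_def)
  obtain a where a: "a < Suc n" "1 \<le> ?M a" "q (?M(a := ?M a - 1)) \<noteq> 0"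
    using mul_sum_nonzero_source[of n q ?M] mul_sum_q P_nz by auto
  let ?M' = "?M(a := ?M a - 1)"
  have "a \<noteq> 0" using a(2) M0 by (intro notI) simp
  have below: "homog_exp n (d - 1) ?M'" by (rule homog_exp_decr[OF hom a(1,2)])
  have "(\<Sum>i<n. ?M' (Suc i)) = d - 1"
    using below M0 \<open>a \<noteq> 0\<close> unfolding homog_exp_def sum.lessThan_Suc_shift by simp
  then have "absZ n (diagram_point n ?M') = int d - 1"
    unfolding absZ_diagram_point using d_pos by linarith
  moreover have "diagram_point n ?M' \<in> K" by (rule point_in_K[OF below a(3)])
  ultimately show ?thesis by blast
qed

text \<open>K fills the simplex {m >= 0, |m| <= d - 1} up to its extreme levels, so its size is d.\<close>
lemma size_K: "lattice_size n K = int d"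
proof -
  have max: "Max (absZ n ` K) = int d - 1"
  proof (rule Max_eqI)
    show "finite (absZ n ` K)" using finite_K by simp
    show "y \<le> int d - 1" if "y \<in> absZ n ` K" for y using that K_in_simplex by auto
    show "int d - 1 \<in> absZ n ` K" using top_in_K by force
  qed
  have min: "Min ((\<lambda>m. m j) ` K) = 0" if "j < n" for j
  proof (rule Min_eqI)
    show "finite ((\<lambda>m. m j) ` K)" using finite_K by simp
    show "0 \<le> y" if "y \<in> (\<lambda>m. m j) ` K" for y using that K_in_simplex \<open>j < n\<close> by auto
    show "0 \<in> (\<lambda>m. m j) ` K" using zero_in_K by force
  qed
  have "(\<Sum>j<n. Min ((\<lambda>m. m j) ` K)) = 0" using min by simp
  then show ?thesis unfolding lattice_size_def max by simp
qed

definition restrict :: "(nat \<Rightarrow> int) set \<Rightarrow> (nat \<Rightarrow> nat) \<Rightarrow> real" where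
  "restrict K' M = (if homog_exp n (d - 1) M \<and> diagram_point n M \<in> K' then q M else 0)"

text \<open>If K' is closed under adjacency within K, then S * (restriction of Q to K') agrees
  with S * Q wherever it is nonzero: all terms of Q contributing to such a coefficient
  have adjacent diagram points, so they all lie in K'.\<close>
lemma mul_sum_restrict:
  assumes closed: "\<And>x y. x \<in> K' \<Longrightarrow> y \<in> K \<Longrightarrow> adjacent n y x \<Longrightarrow> y \<in> K'"
    and nz: "mul_sum (Suc n) (restrict K') M \<noteq> 0"
  shows "mul_sum (Suc n) (restrict K') M = mul_sum (Suc n) q M"
proof -
  obtain a where a: "a < Suc n" "1 \<le> M a" "restrict K' (M(a := M a - 1)) \<noteq> 0"
    using mul_sum_nonzero_source[OF nz] by blast
  let ?Ma = "M(a := M a - 1)"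
  have below_a: "homog_exp n (d - 1) ?Ma" and Ka: "diagram_point n ?Ma \<in> K'"
    using a(3) by (auto simp: restrict_def split: if_splits)
  have "?Ma(a := Suc (?Ma a)) = M" using a(2) by (auto simp: fun_eq_iff)
  then have hom: "homog_exp n d M" using homog_exp_incr[OF below_a a(1)] d_pos by simp
  have "mul_var b (restrict K') M = mul_var b q M" if b: "b < Suc n" for b
  proof (cases "1 \<le> M b \<and> q (M(b := M b - 1)) \<noteq> 0")
    case False
    then show ?thesis by (auto simp: mul_var_def restrict_def)
  next
    case True
    let ?Mb = "M(b := M b - 1)"
    have below_b: "homog_exp n (d - 1) ?Mb" using homog_exp_decr[OF hom b] True by simp
    have Kb: "diagram_point n ?Mb \<in> K" using point_in_K[OF below_b] True by simp
    have "diagram_point n ?Mb \<in> K'"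
    proof (cases "b = a")
      case True
      then show ?thesis using Ka by simp
    next
      case False
      then have "adjacent n (diagram_point n ?Mb) (diagram_point n ?Ma)"
        using adjacent_diagram_points[OF a(1) b] a(2) True by simp
      then show ?thesis using closed[OF Ka Kb] by blast
    qed
    then show ?thesis using below_b True by (simp add: mul_var_def restrict_def)
  qed
  then show ?thesis unfolding mul_sum_def by (intro sum.cong) auto
qed

text \<open>Otherwise the restriction Q' of Q to it has S * Q' matching P off X_0^d, so
  S * Q' = 0 and Q' = 0, contradicting nonemptiness.\<close>
lemma closed_part_contains_origin:
  assumes sub: "K' \<subseteq> K" and ne: "K' \<noteq> {}"
    and closed: "\<And>x y. x \<in> K' \<Longrightarrow> y \<in> K \<Longrightarrow> adjacent n y x \<Longrightarrow> y \<in> K'"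
  shows "(\<lambda>i. 0) \<in> K'"
proof (rule ccontr)
  assume no_origin: "(\<lambda>i. 0) \<notin> K'"
  let ?r = "restrict K'"
  have fin: "finite (supp ?r)"
    by (rule finite_subset[OF _ finite_supp_q]) (auto simp: supp_def restrict_def)
  have X0: "mul_sum (Suc n) ?r (X0_exp d) = 0"
    using no_origin X0_exp_below(2) by (simp add: mul_sum_X0_exp[OF d_pos] restrict_def)
  have match: "mul_sum (Suc n) ?r M = P_coeff n d p M" if "mul_sum (Suc n) ?r M \<noteq> 0" for M
    using mul_sum_restrict[of K', OF closed that] mul_sum_q by simp
  have "mul_sum (Suc n) ?r M = 0" for M
    by (rule mul_sum_vanishes_if_matches_P[OF fin match X0])
  then have r_zero: "?r M = 0" for M by (intro mul_sum_eq_zero_imp_zero[OF fin])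
  obtain m where m: "m \<in> K'" using ne by blast
  then have mK: "m \<in> Zn n" "admissible n d m" "q (diagram_exp n d m) \<noteq> 0"
    using sub by (auto simp: newton_support_iff)
  have "?r (diagram_exp n d m) = q (diagram_exp n d m)"
    using homog_exp_diagram_exp[OF mK(1,2)] diagram_point_exp[OF mK(1,2)] m
    by (simp add: restrict_def)
  then show False using r_zero mK(3) by simp
qed

text \<open>Connectivity: the points of K not reachable from the origin form a part closed
  under adjacency that misses the origin, hence are empty.\<close>
lemma connected_K: "lattice_connected n K"
proof -
  let ?step = "\<lambda>x y. x \<in> K \<and> y \<in> K \<and> adjacent n x y"
  have sym: "?step\<^sup>*\<^sup>* y x" if "?step\<^sup>*\<^sup>* x y" for x y
    using that
  proof (induction rule: rtranclp_induct)
    case base then show ?case by simp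
  next
    case (step y z)
    then have "?step z y" using adjacent_sym by blast
    then show ?case using step(3) by (rule converse_rtranclp_into_rtranclp)
  qed
  define K' where "K' = {m \<in> K. \<not> ?step\<^sup>*\<^sup>* (\<lambda>i. 0) m}"
  have closed: "y \<in> K'" if x: "x \<in> K'" and y: "y \<in> K" and adj: "adjacent n y x" for x y
  proof (rule ccontr)
    assume "y \<notin> K'"
    then have "?step\<^sup>*\<^sup>* (\<lambda>i. 0) y" using y by (simp add: K'_def)
    moreover have "?step y x" using x y adj by (simp add: K'_def)
    ultimately have "?step\<^sup>*\<^sup>* (\<lambda>i. 0) x" by (rule rtranclp.rtrancl_into_rtrancl[of ?step])
    then show False using x by (simp add: K'_def)
  qed
  have "K' = {}"
  proof (rule ccontr)
    assume "K' \<noteq> {}"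
    moreover have "K' \<subseteq> K" by (auto simp: K'_def)
    ultimately have "(\<lambda>i. 0) \<in> K'" using closed_part_contains_origin closed by blast
    then show False by (simp add: K'_def)
  qed
  then have "?step\<^sup>*\<^sup>* (\<lambda>i. 0) m" if "m \<in> K" for m using that by (auto simp: K'_def)
  then show ?thesis unfolding lattice_connected_def using sym by (blast intro: rtranclp_trans)
qed

end

theorem mainTheorem13:
  fixes n d :: nat and p :: "(nat \<Rightarrow> nat) \<Rightarrow> real"
  assumes "d \<ge> 1" and "H n d p"
  shows "(\<exists>q. is_quotient n d p q) \<and>
         (\<forall>q. is_quotient n d p q \<longrightarrow>
            lattice_connected n (newton_support n d q)
            \<and> (\<lambda>i. 0) \<in> newton_support n d q
            \<and> lattice_size n (newton_support n d q) = int d)"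
proof -
  interpret H_poly n d p using assms by unfold_locales
  have "is_quotient n d p (div_S n d (P_coeff n d p))" by (rule quotient_exists)
  moreover have "lattice_connected n (newton_support n d q)
            \<and> (\<lambda>i. 0) \<in> newton_support n d q
            \<and> lattice_size n (newton_support n d q) = int d"
    if "is_quotient n d p q" for q
  proof -
    interpret H_quotient n d p q using assms that by unfold_locales
    show ?thesis using connected_K zero_in_K size_K by blast
  qed
  ultimately show ?thesis by blast
qed

end
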